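(* If $K$ is a convex body in $\mathbb{R}^n$ whose centroid is the origin, and $K\subset R\,B^n$ for some $R>0$, then $rB^n\subset K$ for some $$r\geq \frac{n^{n/2}}{5^n}\cdot\frac{V(K)}{R^{n-1}}.$$
   Context: A convex body is a compact convex set with non-empty interior; $V$ is volume; $B^n$ is the closed Euclidean unit ball centered at the origin. *)

theory Defs
  imports "HOL-Analysis.Analysis"
begin

definition convex_body :: "'a::euclidean_space set \<Rightarrow> bool" where
  "convex_body K \<longleftrightarrow> compact K \<and> convex K \<and> interior K \<noteq> {}"

definition centroid :: "'a::euclidean_space set \<Rightarrow> 'a" where
  "centroid K = (1 / measure lebesgue K) *\<^sub>R integral K (\<lambda>x. x)"

end

theory Submission
  imports Defs
begin

(*
  Let p be a point outside K with |p| <= s, and separate it from K by a unit vector u, so that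
  u.x < s on K.  As the centroid is 0, the first moment of K in direction u vanishes; this forces
  the part of K below the hyperplane u.x = -s to be no larger than the part above u.x = 0, so
  V(K) <= 2 V(P) + V(M), where P and M are the parts of K in the slabs 0 <= u.x <= s and
  -s <= u.x <= 0 of R B^n.  Sweeping such a slab along u over a parameter interval of length
  2L - s stays inside the ball of radius sqrt(R^2 + L^2), so Fubini gives
  (2L - s) V(slab) <= s V(sqrt(R^2 + L^2) B^n).  Hence V(K) (2L - s) <= 3 s V(sqrt(R^2 + L^2) B^n),
  a lower bound for the distance from 0 to the complement of K.  With L of order R / sqrt n the
  constant n^(n/2) / 5^n follows from 10 pi^n n^(n+1) <= 25^n Gamma(n/2 + 1)^2.
*)

lemma emeasure_lborel_vimage_translate:
  fixes W :: "'a::euclidean_space set"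
  assumes "W \<in> sets borel"
  shows "emeasure lborel ((\<lambda>y. y - v) -` W) = emeasure lborel W"
proof -
  have "emeasure lborel W = emeasure (distr lborel borel ((+) (- v))) W"
    by (simp add: lborel_distr_plus)
  also have "\<dots> = emeasure lborel ((+) (- v) -` W)"
    using assms by (subst emeasure_distr) auto
  also have "(+) (- v) -` W = (\<lambda>y. y - v) -` W"
    by auto
  finally show ?thesis ..
qed

lemma emeasure_slab_translates_le:
  fixes W C :: "'a::euclidean_space set" and u :: 'a
  assumes W: "W \<in> sets borel" and C: "C \<in> sets borel" and u: "norm u = 1" and s: "0 \<le> s"
    and W_slab: "\<And>x. x \<in> W \<Longrightarrow> a \<le> u \<bullet> x \<and> u \<bullet> x \<le> a + s"
    and translates: "\<And>x t. x \<in> W \<Longrightarrow> t \<in> {c..d} \<Longrightarrow> x + t *\<^sub>R u \<in> C"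
  shows "ennreal (d - c) * emeasure lborel W \<le> ennreal s * emeasure lborel C"
proof -
  have uu: "u \<bullet> u = 1"
    using u by (simp add: dot_square_norm)
  \<comment> \<open>Measure \<open>E\<close> in two ways: its \<open>t\<close>-sections are translates of \<open>W\<close>, its \<open>y\<close>-sections are intervals of length \<open>s\<close>.\<close>
  define E where "E = {(t, y). t \<in> {c..d} \<and> y \<in> C \<and> y - t *\<^sub>R u \<in> W}"
  have "E = {p \<in> space (lborel \<Otimes>\<^sub>M lborel).
              fst p \<in> {c..d} \<and> snd p \<in> C \<and> snd p - fst p *\<^sub>R u \<in> W}"
    by (auto simp: E_def space_pair_measure)
  also have "\<dots> \<in> sets (lborel \<Otimes>\<^sub>M (lborel :: 'a measure))"
  proof -
    have "(\<lambda>p::real \<times> 'a. snd p - fst p *\<^sub>R u) \<in> borel_measurable (lborel \<Otimes>\<^sub>M lborel)"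
      by measurable
    then have "Measurable.pred (lborel \<Otimes>\<^sub>M lborel) (\<lambda>p::real \<times> 'a. snd p - fst p *\<^sub>R u \<in> W)"
      by (rule pred_sets2[OF W])
    moreover have "Measurable.pred (lborel \<Otimes>\<^sub>M (lborel :: 'a measure)) (\<lambda>p. snd p \<in> C)"
      by (rule pred_sets2[OF C]) auto
    ultimately show ?thesis by measurable
  qed
  finally have E: "E \<in> sets (lborel \<Otimes>\<^sub>M lborel)" .
  have "emeasure (lborel \<Otimes>\<^sub>M lborel) E = (\<integral>\<^sup>+t. emeasure lborel (Pair t -` E) \<partial>lborel)"
    using E by (rule lborel.emeasure_pair_measure_alt)
  also have "\<dots> = (\<integral>\<^sup>+t. emeasure lborel W * indicator {c..d} t \<partial>lborel)"
  proof (rule nn_integral_cong)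
    fix t :: real
    have "Pair t -` E = (if t \<in> {c..d} then (\<lambda>y. y - t *\<^sub>R u) -` W else {})"
      using translates[of _ t] by (force simp: E_def)
    then show "emeasure lborel (Pair t -` E) = emeasure lborel W * indicator {c..d} t"
      by (simp add: emeasure_lborel_vimage_translate[OF W])
  qed
  also have "\<dots> = ennreal (d - c) * emeasure lborel W"
    by (simp add: nn_integral_cmult_indicator emeasure_lborel_Icc_eq ennreal_neg mult.commute)
  finally have "emeasure (lborel \<Otimes>\<^sub>M lborel) E = ennreal (d - c) * emeasure lborel W" .
  moreover have "emeasure (lborel \<Otimes>\<^sub>M lborel) E = (\<integral>\<^sup>+y. emeasure lborel ((\<lambda>t. (t, y)) -` E) \<partial>lborel)"
    using E by (rule lborel_pair.emeasure_pair_measure_alt2)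
  moreover have "\<dots> \<le> (\<integral>\<^sup>+y. ennreal s * indicator C y \<partial>lborel)"
  proof (rule nn_integral_mono)
    fix y :: 'a
    have "(\<lambda>t. (t, y)) -` E \<subseteq> (if y \<in> C then {u \<bullet> y - a - s .. u \<bullet> y - a} else {})"
      by (force simp: E_def inner_diff_right uu dest: W_slab)
    then have "emeasure lborel ((\<lambda>t. (t, y)) -` E)
        \<le> emeasure lborel (if y \<in> C then {u \<bullet> y - a - s .. u \<bullet> y - a} else {})"
      by (intro emeasure_mono) auto
    then show "emeasure lborel ((\<lambda>t. (t, y)) -` E) \<le> ennreal s * indicator C y"
      using s by (auto split: if_splits)
  qed
  moreover have "\<dots> = ennreal s * emeasure lborel C"
    using C by (simp add: nn_integral_cmult_indicator)
  ultimately show ?thesis by simp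
qed

lemma measure_slab_translates_le:
  fixes W C :: "'a::euclidean_space set" and u :: 'a
  assumes W: "W \<in> sets borel" "bounded W" and C: "C \<in> sets borel" "bounded C"
    and u: "norm u = 1" and s: "0 \<le> s"
    and W_slab: "\<And>x. x \<in> W \<Longrightarrow> a \<le> u \<bullet> x \<and> u \<bullet> x \<le> a + s"
    and translates: "\<And>x t. x \<in> W \<Longrightarrow> t \<in> {c..d} \<Longrightarrow> x + t *\<^sub>R u \<in> C"
  shows "(d - c) * measure lebesgue W \<le> s * measure lebesgue C"
proof (cases "c \<le> d")
  case True
  have emeasure_eq: "emeasure lborel X = ennreal (measure lborel X)" if "bounded X" for X :: "'a set"
    using emeasure_bounded_finite[OF that] by (intro emeasure_eq_ennreal_measure) auto
  have "ennreal (d - c) * emeasure lborel W \<le> ennreal s * emeasure lborel C"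
    by (rule emeasure_slab_translates_le[OF W(1) C(1) u s W_slab translates])
  then have "ennreal ((d - c) * measure lborel W) \<le> ennreal (s * measure lborel C)"
    using True s by (simp add: emeasure_eq W C ennreal_mult)
  then show ?thesis
    using s W C by (simp add: ennreal_le_iff)
next
  case False
  then have "(d - c) * measure lebesgue W \<le> 0"
    by (intro mult_nonpos_nonneg) auto
  also have "0 \<le> s * measure lebesgue C"
    using s by simp
  finally show ?thesis .
qed

lemma norm_add_scaleR_unit_sq:
  fixes x u :: "'a::real_inner"
  assumes "norm u = 1"
  shows "(norm (x + t *\<^sub>R u))\<^sup>2 = (norm x)\<^sup>2 - (u \<bullet> x)\<^sup>2 + (t + u \<bullet> x)\<^sup>2"
proof -
  have "u \<bullet> u = 1"
    using assms by (simp add: dot_square_norm)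
  have "(norm (x + t *\<^sub>R u))\<^sup>2 = x \<bullet> x + 2 * t * (u \<bullet> x) + t\<^sup>2 * (u \<bullet> u)"
    unfolding power2_norm_eq_inner
    by (simp add: inner_add_left inner_add_right inner_commute algebra_simps power2_eq_square)
  also have "\<dots> = (norm x)\<^sup>2 - (u \<bullet> x)\<^sup>2 + (t + u \<bullet> x)\<^sup>2"
    using \<open>u \<bullet> u = 1\<close> by (simp add: dot_square_norm power2_sum)
  finally show ?thesis .
qed

lemma measure_ball_slab_le:
  fixes u :: "'a::euclidean_space"
  assumes u: "norm u = 1" and s: "0 \<le> s"
  shows "(2 * L - s) * measure lebesgue (cball 0 R \<inter> {x. a \<le> u \<bullet> x \<and> u \<bullet> x \<le> a + s})
           \<le> s * measure lebesgue (cball (0::'a) (sqrt (R\<^sup>2 + L\<^sup>2)))"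
proof -
  let ?W = "cball 0 R \<inter> {x. a \<le> u \<bullet> x \<and> u \<bullet> x \<le> a + s}"
  have "((L - a - s) - (- L - a)) * measure lebesgue ?W
          \<le> s * measure lebesgue (cball (0::'a) (sqrt (R\<^sup>2 + L\<^sup>2)))"
  proof (rule measure_slab_translates_le[OF _ _ _ _ u s])
    show "?W \<in> sets borel"
      by (intro borel_closed closed_Int closed_cball closed_Collect_conj
          closed_halfspace_ge closed_halfspace_le)
    show "x + t *\<^sub>R u \<in> cball 0 (sqrt (R\<^sup>2 + L\<^sup>2))" if "x \<in> ?W" "t \<in> {- L - a..L - a - s}" for x t
    proof -
      \<comment> \<open>the parameter interval is chosen so that \<open>|t + u \<bullet> x| \<le> L\<close> on the slab\<close>
      have "(norm (x + t *\<^sub>R u))\<^sup>2 = (norm x)\<^sup>2 - (u \<bullet> x)\<^sup>2 + (t + u \<bullet> x)\<^sup>2"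
        using u by (rule norm_add_scaleR_unit_sq)
      also have "\<dots> \<le> R\<^sup>2 + L\<^sup>2"
      proof -
        have "(norm x)\<^sup>2 \<le> R\<^sup>2"
          using that by (intro power_mono) auto
        moreover have "(t + u \<bullet> x)\<^sup>2 \<le> L\<^sup>2"
          using that by (intro power2_le_iff_abs_le[THEN iffD2]) auto
        moreover have "0 \<le> (u \<bullet> x)\<^sup>2"
          by simp
        ultimately show ?thesis by linarith
      qed
      finally show ?thesis
        by (simp add: real_le_rsqrt)
    qed
  qed auto
  then show ?thesis by simp
qed

lemma has_integral_inner_centroid_eq_0:
  fixes K :: "'a::euclidean_space set"
  assumes K: "compact K" "centroid K = 0" "measure lebesgue K \<noteq> 0"
  shows "((\<lambda>x. u \<bullet> x) has_integral 0) K"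
proof -
  obtain B where B: "\<And>x. x \<in> K \<Longrightarrow> norm x \<le> B"
    using compact_imp_bounded[OF K(1)] bounded_iff by blast
  have K_meas: "K \<in> lmeasurable"
    using K(1) by (rule lmeasurable_compact)
  have "(\<lambda>x. x) absolutely_integrable_on K"
  proof (rule measurable_bounded_by_integrable_imp_absolutely_integrable[where g = "\<lambda>_. B"])
    show "(\<lambda>x. x) \<in> borel_measurable (lebesgue_on K)"
      using K_meas by (intro continuous_imp_measurable_on_sets_lebesgue continuous_intros) auto
  qed (use K_meas B in \<open>auto intro: integrable_on_const\<close>)
  then have "(\<lambda>x. x) integrable_on K"
    using set_lebesgue_integral_eq_integral(1) by blast
  moreover have "integral K (\<lambda>x. x) = 0"
    using K(2,3) by (simp add: centroid_def)
  ultimately have "((\<lambda>x. x) has_integral 0) K"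
    by (metis has_integral_integral)
  from has_integral_linear[OF this bounded_linear_inner_right[of u]] show ?thesis
    by (simp add: o_def)
qed

lemma measure_cap_le_opposite_cap:
  fixes K :: "'a::euclidean_space set"
  assumes K: "compact K" "centroid K = 0" "measure lebesgue K \<noteq> 0"
    and s: "0 < s" and below: "\<And>x. x \<in> K \<Longrightarrow> u \<bullet> x < s"
  shows "measure lebesgue (K \<inter> {x. u \<bullet> x \<le> - s}) \<le> measure lebesgue (K \<inter> {x. 0 \<le> u \<bullet> x})"
proof -
  define A where "A = K \<inter> {x. u \<bullet> x \<le> - s}"
  define P where "P = K \<inter> {x. 0 \<le> u \<bullet> x}"
  have indicator_integral: "(indicat_real S has_integral measure lebesgue S) K"
    if "S \<in> lmeasurable" "S \<subseteq> K" for S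
  proof -
    have "(indicat_real S has_integral measure lebesgue S) UNIV"
      using that(1) by (simp add: lmeasurable_iff_has_integral)
    moreover have "(\<lambda>x. if x \<in> K then indicat_real S x else 0) = indicat_real S"
      using that(2) by (auto simp: indicator_def fun_eq_iff)
    ultimately show ?thesis
      using has_integral_restrict[of K UNIV "indicat_real S"] by simp
  qed
  have "(indicat_real P has_integral measure lebesgue P) K"
       "(indicat_real A has_integral measure lebesgue A) K"
    unfolding A_def P_def using K(1)
    by (auto intro!: indicator_integral lmeasurable_compact compact_Int_closed
        closed_halfspace_le closed_halfspace_ge)
  then have "((\<lambda>x. s * indicator P x - s * indicator A x) has_integral
               s * measure lebesgue P - s * measure lebesgue A) K"
    by (intro has_integral_diff has_integral_mult_right)
  moreover have "u \<bullet> x \<le> s * indicator P x - s * indicator A x" if "x \<in> K" for x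
    using below[OF that] that s by (auto simp: indicator_def A_def P_def)
  ultimately have "0 \<le> s * measure lebesgue P - s * measure lebesgue A"
    using has_integral_le[OF has_integral_inner_centroid_eq_0[OF K]] by blast
  then show ?thesis
    using s by (simp add: A_def P_def)
qed

lemma measure_le_twice_cap_plus_band:
  fixes K :: "'a::euclidean_space set"
  assumes K: "compact K" "centroid K = 0"
    and s: "0 < s" and below: "\<And>x. x \<in> K \<Longrightarrow> u \<bullet> x < s"
  shows "measure lebesgue K \<le> 2 * measure lebesgue (K \<inter> {x. 0 \<le> u \<bullet> x})
                              + measure lebesgue (K \<inter> {x. - s \<le> u \<bullet> x \<and> u \<bullet> x \<le> 0})"
proof (cases "measure lebesgue K = 0")
  case False
  define A where "A = K \<inter> {x. u \<bullet> x \<le> - s}"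
  define M where "M = K \<inter> {x. - s \<le> u \<bullet> x \<and> u \<bullet> x \<le> 0}"
  define P where "P = K \<inter> {x. 0 \<le> u \<bullet> x}"
  have meas: "A \<in> lmeasurable" "M \<in> lmeasurable" "P \<in> lmeasurable"
    unfolding A_def M_def P_def using K(1)
    by (auto intro!: lmeasurable_compact compact_Int_closed closed_Collect_conj
        closed_halfspace_le closed_halfspace_ge)
  have "K = A \<union> M \<union> P"
    by (auto simp: A_def M_def P_def)
  then have "measure lebesgue K \<le> measure lebesgue (A \<union> M) + measure lebesgue P"
    using meas by (simp add: measure_Un_le fmeasurableD)
  also have "measure lebesgue (A \<union> M) \<le> measure lebesgue A + measure lebesgue M"
    using meas by (simp add: measure_Un_le fmeasurableD)
  also have "measure lebesgue A \<le> measure lebesgue P"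
    unfolding A_def P_def using False by (intro measure_cap_le_opposite_cap K s below)
  finally show ?thesis
    by (simp add: M_def P_def)
qed simp

lemma measure_le_ball_measure_of_halfspace:
  fixes K :: "'a::euclidean_space set" and u :: 'a
  assumes K: "compact K" "centroid K = 0" "K \<subseteq> cball 0 R"
    and u: "norm u = 1" and s: "0 < s" and below: "\<And>x. x \<in> K \<Longrightarrow> u \<bullet> x < s"
  shows "measure lebesgue K * (2 * L - s) \<le> 3 * s * measure lebesgue (cball (0::'a) (sqrt (R\<^sup>2 + L\<^sup>2)))"
proof (cases "2 * L - s \<le> 0")
  case True
  then have "measure lebesgue K * (2 * L - s) \<le> 0"
    by (intro mult_nonneg_nonpos) auto
  also have "0 \<le> 3 * s * measure lebesgue (cball (0::'a) (sqrt (R\<^sup>2 + L\<^sup>2)))"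
    using s by simp
  finally show ?thesis .
next
  case False
  define slab where "slab a = cball 0 R \<inter> {x. a \<le> u \<bullet> x \<and> u \<bullet> x \<le> a + s}" for a
  have slab_meas: "slab a \<in> lmeasurable" for a
    unfolding slab_def
    by (intro lmeasurable_compact compact_Int_closed compact_cball closed_Collect_conj
        closed_halfspace_le closed_halfspace_ge)
  have "K \<inter> {x. 0 \<le> u \<bullet> x} \<subseteq> slab 0"
    using K(3) below by (fastforce simp: slab_def less_imp_le)
  then have "measure lebesgue (K \<inter> {x. 0 \<le> u \<bullet> x}) \<le> measure lebesgue (slab 0)"
    using slab_meas K(1)
    by (intro measure_mono_fmeasurable) (auto intro!: fmeasurableD lmeasurable_compact
        compact_Int_closed closed_Collect_conj closed_halfspace_le closed_halfspace_ge)
  moreover have "K \<inter> {x. - s \<le> u \<bullet> x \<and> u \<bullet> x \<le> 0} \<subseteq> slab (- s)"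
    using K(3) by (fastforce simp: slab_def)
  then have "measure lebesgue (K \<inter> {x. - s \<le> u \<bullet> x \<and> u \<bullet> x \<le> 0}) \<le> measure lebesgue (slab (- s))"
    using slab_meas K(1)
    by (intro measure_mono_fmeasurable) (auto intro!: fmeasurableD lmeasurable_compact
        compact_Int_closed closed_Collect_conj closed_halfspace_le closed_halfspace_ge)
  ultimately have "measure lebesgue K \<le> 2 * measure lebesgue (slab 0) + measure lebesgue (slab (- s))"
    using measure_le_twice_cap_plus_band[OF K(1,2) s below] by linarith
  then have "measure lebesgue K * (2 * L - s)
      \<le> (2 * measure lebesgue (slab 0) + measure lebesgue (slab (- s))) * (2 * L - s)"
    using False by (intro mult_right_mono) auto
  also have "\<dots> \<le> 3 * s * measure lebesgue (cball (0::'a) (sqrt (R\<^sup>2 + L\<^sup>2)))"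
    using measure_ball_slab_le[OF u less_imp_le[OF s], of L R 0]
          measure_ball_slab_le[OF u less_imp_le[OF s], of L R "- s"]
    by (simp add: slab_def algebra_simps)
  finally show ?thesis .
qed

lemma separating_unit_vector:
  fixes K :: "'a::euclidean_space set"
  assumes "convex K" "closed K" "K \<noteq> {}" "p \<notin> K"
  obtains u where "norm u = 1" "\<And>x. x \<in> K \<Longrightarrow> u \<bullet> x < u \<bullet> p"
proof -
  obtain a b where ab: "a \<bullet> p < b" "\<And>x. x \<in> K \<Longrightarrow> b < a \<bullet> x"
    using separating_hyperplane_closed_point[OF assms(1,2,4)] by blast
  have "a \<noteq> 0"
    using ab assms(3) by fastforce
  show ?thesis
  proof
    show "norm (- a /\<^sub>R norm a) = 1"
      using \<open>a \<noteq> 0\<close> by simp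
    show "(- a /\<^sub>R norm a) \<bullet> x < (- a /\<^sub>R norm a) \<bullet> p" if "x \<in> K" for x
      using ab(1) ab(2)[OF that] \<open>a \<noteq> 0\<close> by (simp add: divide_strict_right_mono)
  qed
qed

lemma measure_convex_body_pos:
  assumes "convex_body K"
  shows "0 < measure lebesgue K"
proof -
  have "compact K" "interior K \<noteq> {}"
    using assms by (auto simp: convex_body_def)
  then obtain x e where "0 < e" "ball x e \<subseteq> K"
    by (auto simp: mem_interior)
  then have "measure lebesgue (ball x e) \<le> measure lebesgue K"
    using \<open>compact K\<close> by (intro measure_mono_fmeasurable lmeasurable_compact) auto
  moreover have "0 < measure lebesgue (ball x e)"
    using \<open>0 < e\<close> by simp
  ultimately show ?thesis
    by linarith
qed

lemma measure_le_of_point_outside: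
  fixes K :: "'a::euclidean_space set"
  assumes K: "convex_body K" "centroid K = 0" "K \<subseteq> cball 0 R"
    and p: "p \<notin> K" "norm p \<le> s" and "0 < s"
  shows "2 * L * measure lebesgue K \<le> s * (3 * measure lebesgue (cball (0::'a) (sqrt (R\<^sup>2 + L\<^sup>2)))
                                          + measure lebesgue (cball (0::'a) R))"
proof -
  have "compact K" "convex K" "K \<noteq> {}"
    using K(1) by (auto simp: convex_body_def)
  then obtain u where u: "norm u = 1" "\<And>x. x \<in> K \<Longrightarrow> u \<bullet> x < u \<bullet> p"
    using separating_unit_vector compact_imp_closed p(1) by metis
  have below: "u \<bullet> x < s" if "x \<in> K" for x
  proof -
    have "u \<bullet> p \<le> norm p"
      using norm_cauchy_schwarz[of u p] u(1) by simp
    then show ?thesis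
      using u(2)[OF that] p(2) by simp
  qed
  have "measure lebesgue K * (2 * L - s)
      \<le> 3 * s * measure lebesgue (cball (0::'a) (sqrt (R\<^sup>2 + L\<^sup>2)))"
    using measure_le_ball_measure_of_halfspace[OF \<open>compact K\<close> K(2,3) u(1) \<open>0 < s\<close> below] .
  moreover have "measure lebesgue K * s \<le> measure lebesgue (cball (0::'a) R) * s"
    using K(3) \<open>compact K\<close> \<open>0 < s\<close>
    by (intro mult_right_mono measure_mono_fmeasurable) (auto intro: fmeasurableD lmeasurable_compact)
  ultimately show ?thesis
    by (simp add: algebra_simps)
qed

lemma cball_subset_convex_body_by_ball_measures:
  fixes K :: "'a::euclidean_space set"
  assumes K: "convex_body K" "centroid K = 0" "K \<subseteq> cball 0 R" and "0 < L"
  shows "cball 0 (2 * L * measure lebesgue K / (3 * measure lebesgue (cball (0::'a) (sqrt (R\<^sup>2 + L\<^sup>2)))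
                    + measure lebesgue (cball (0::'a) R))) \<subseteq> K"
proof -
  define D where "D = 3 * measure lebesgue (cball (0::'a) (sqrt (R\<^sup>2 + L\<^sup>2)))
                    + measure lebesgue (cball (0::'a) R)"
  define r where "r = 2 * L * measure lebesgue K / D"
  have "0 < measure lebesgue K"
    using K(1) by (rule measure_convex_body_pos)
  moreover have "measure lebesgue K \<le> measure lebesgue (cball (0::'a) R)"
    using K(1,3) by (intro measure_mono_fmeasurable)
      (auto intro: fmeasurableD lmeasurable_compact simp: convex_body_def)
  ultimately have "0 < D"
    unfolding D_def by (intro add_nonneg_pos) (simp, linarith)
  then have "0 < r"
    using \<open>0 < measure lebesgue K\<close> \<open>0 < L\<close> by (simp add: r_def)
  have "ball 0 r \<subseteq> K"
  proof
    fix p :: 'a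
    assume "p \<in> ball 0 r"
    show "p \<in> K"
    proof (rule ccontr)
      assume "p \<notin> K"
      define s where "s = (norm p + r) / 2"
      have "norm p \<le> s" "s < r" "0 < s"
        using \<open>p \<in> ball 0 r\<close> \<open>0 < r\<close> by (auto simp: s_def add_nonneg_pos)
      have "2 * L * measure lebesgue K \<le> s * D"
        unfolding D_def using measure_le_of_point_outside[OF K \<open>p \<notin> K\<close> \<open>norm p \<le> s\<close> \<open>0 < s\<close>] .
      then have "r \<le> s"
        using \<open>0 < D\<close> by (simp add: r_def divide_le_eq mult.commute)
      with \<open>s < r\<close> show False
        by simp
    qed
  qed
  then have "closure (ball 0 r) \<subseteq> K"
    using K(1) by (intro closure_minimal) (auto intro: compact_imp_closed simp: convex_body_def)
  then show ?thesis
    using \<open>0 < r\<close> by (simp add: r_def D_def)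
qed

lemma one_plus_div_power_le_exp:
  fixes a :: real
  assumes "0 \<le> a" "0 < n"
  shows "(1 + a / n) ^ n \<le> exp a"
proof -
  have "(1 + a / n) ^ n \<le> exp (a / n) ^ n"
    using assms by (intro power_mono) (auto simp: exp_ge_add_one_self add_nonneg_nonneg)
  also have "\<dots> = exp a"
    using assms by (simp add: exp_of_nat_mult[symmetric])
  finally show ?thesis .
qed

lemma powr_half_eq_sqrt_power:
  fixes x :: real
  assumes "0 < x"
  shows "x powr (real n / 2) = sqrt x ^ n"
  using assms by (simp add: powr_half_sqrt_powr powr_realpow real_sqrt_power)

lemma pi_squared_le_10: "pi\<^sup>2 \<le> 10"
proof -
  have "pi\<^sup>2 \<le> (3.15 :: real)\<^sup>2"
    using pi_approx pi_gt_zero by (intro power_mono) auto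
  then show ?thesis
    by (simp add: power2_eq_square)
qed

lemma pi_squared_mult_power_ratio_le:
  assumes "3 \<le> m"
  shows "4 * pi\<^sup>2 * (real m + 2) ^ (m + 1) \<le> 625 * real m ^ (m + 1)"
proof -
  define q where "q = 1 + 2 / real m"
  have eq: "(real m + 2) ^ (m + 1) = real m ^ (m + 1) * (q ^ m * q)"
    using assms by (simp add: q_def field_simps flip: power_mult_distrib)
  have "q ^ m * q \<le> 9 * (5 / 3)"
  proof (intro mult_mono)
    have "q ^ m \<le> exp 2"
      unfolding q_def using one_plus_div_power_le_exp[of 2 m] assms by simp
    also have "exp 2 = exp 1 * exp (1 :: real)"
      by (simp flip: exp_add)
    also have "\<dots> \<le> 3 * 3"
      using exp_le by (intro mult_mono) auto
    finally show "q ^ m \<le> 9"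
      by simp
    show "q \<le> 5 / 3"
      using assms by (simp add: q_def field_simps)
  qed (auto simp: q_def)
  then have "real m ^ (m + 1) * (q ^ m * q) \<le> real m ^ (m + 1) * 15"
    by (intro mult_left_mono) auto
  then have "(real m + 2) ^ (m + 1) \<le> 15 * real m ^ (m + 1)"
    using eq by linarith
  then have "pi\<^sup>2 * (real m + 2) ^ (m + 1) \<le> 10 * (15 * real m ^ (m + 1))"
    using pi_squared_le_10 by (intro mult_mono) auto
  moreover have "0 \<le> real m ^ (m + 1)"
    by simp
  ultimately show ?thesis
    by linarith
qed

lemma Gamma_five_halves: "Gamma (5 / 2 :: real) = 3 / 4 * sqrt pi"
proof -
  have "(3 / 2 :: real) \<notin> \<int>\<^sub>\<le>\<^sub>0" "(1 / 2 :: real) \<notin> \<int>\<^sub>\<le>\<^sub>0"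
    using nonpos_Ints_nonpos by fastforce+
  then have "Gamma (5 / 2 :: real) = 3 / 2 * (1 / 2 * Gamma (1 / 2))"
    using Gamma_plus1[of "3 / 2 :: real"] Gamma_plus1[of "1 / 2 :: real"] by simp
  then show ?thesis
    by (simp add: Gamma_one_half_real)
qed

lemma Gamma_half_add_two:
  "Gamma (real (m + 2) / 2 + 1) = real (m + 2) / 2 * Gamma (real m / 2 + 1)"
proof -
  have "real m / 2 + 1 \<notin> \<int>\<^sub>\<le>\<^sub>0"
    using nonpos_Ints_nonpos[of "real m / 2 + 1"] by (auto simp del: of_nat_add)
  from Gamma_plus1[OF this] show ?thesis
    by (simp add: add_divide_distrib)
qed

lemma pi_power_le_Gamma_squared:
  assumes "3 \<le> n"
  shows "10 * pi ^ n * real n ^ (n + 1) \<le> 25 ^ n * Gamma (real n / 2 + 1) ^ 2"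
  using assms
proof (induction n rule: less_induct)
  case (less n)
  consider "n = 3" | "n = 4" | "5 \<le> n"
    using less.prems by linarith
  then show ?case
  proof cases
    case 1
    have Gamma_sq: "Gamma (5 / 2 :: real) ^ 2 = 9 / 16 * pi"
      by (simp only: Gamma_five_halves) (simp add: power_mult_distrib power_divide real_sqrt_pow2)
    have "10 * pi ^ 3 * real 3 ^ (3 + 1) = 810 * pi * pi\<^sup>2"
      by (simp add: power3_eq_cube power2_eq_square)
    also have "\<dots> \<le> 810 * pi * 10"
      using pi_squared_le_10 pi_gt_zero by (intro mult_left_mono) auto
    also have "\<dots> \<le> 25 ^ 3 * (9 / 16 * pi)"
      using pi_gt_zero by simp
    also have "\<dots> = 25 ^ 3 * Gamma (real 3 / 2 + 1) ^ 2"
      by (simp add: Gamma_sq)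
    finally show ?thesis
      using 1 by simp
  next
    case 2
    have "(pi\<^sup>2)\<^sup>2 \<le> (10 :: real)\<^sup>2"
      using pi_squared_le_10 by (intro power_mono) auto
    then have "pi ^ 4 \<le> 100"
      by simp
    then show ?thesis
      using 2 by (simp add: Gamma_numeral)
  next
    case 3
    define m where "m = n - 2"
    have "3 \<le> m" and n: "real n = real m + 2" "n = m + 2"
      using 3 by (auto simp: m_def)
    have Gamma_step: "Gamma (real n / 2 + 1) = real n / 2 * Gamma (real m / 2 + 1)"
      using Gamma_half_add_two[of m] by (simp only: n(2))
    have "10 * pi ^ n * real n ^ (n + 1)
        = real n ^ 2 * (pi\<^sup>2 * real n ^ (m + 1)) * (10 * pi ^ m)"
      by (simp add: n(2) power_add power2_eq_square mult_ac)
    also have "\<dots> \<le> real n ^ 2 * (625 / 4 * real m ^ (m + 1)) * (10 * pi ^ m)"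
      using pi_squared_mult_power_ratio_le[OF \<open>3 \<le> m\<close>] by (simp add: n(1))
    also have "\<dots> = 625 / 4 * real n ^ 2 * (10 * pi ^ m * real m ^ (m + 1))"
      by (simp add: mult_ac)
    also have "\<dots> \<le> 625 / 4 * real n ^ 2 * (25 ^ m * Gamma (real m / 2 + 1) ^ 2)"
      using less.IH[of m] \<open>3 \<le> m\<close> n(2) by (intro mult_left_mono) auto
    also have "\<dots> = 25 ^ n * Gamma (real n / 2 + 1) ^ 2"
      unfolding Gamma_step unfolding n(2) by (simp add: power_add power_mult_distrib power_divide mult_ac)
    finally show ?thesis .
  qed
qed

lemma sqrt_pi_power_le_Gamma:
  assumes "3 \<le> n"
  shows "sqrt 10 * (sqrt pi ^ n * sqrt n ^ n * sqrt n) \<le> 5 ^ n * Gamma (real n / 2 + 1)"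
proof -
  have sqrt_power_sq: "(sqrt x ^ k)\<^sup>2 = x ^ k" if "0 \<le> x" for x :: real and k
  proof -
    have "(sqrt x ^ k)\<^sup>2 = (sqrt x * sqrt x) ^ k"
      by (simp only: power2_eq_square power_mult_distrib)
    then show ?thesis
      using that by simp
  qed
  have "(sqrt 10 * (sqrt pi ^ n * sqrt n ^ n * sqrt n))\<^sup>2 = 10 * pi ^ n * real n ^ (n + 1)"
    unfolding power_mult_distrib by (simp add: sqrt_power_sq)
  moreover have "(5 ^ n * Gamma (real n / 2 + 1))\<^sup>2 = 25 ^ n * Gamma (real n / 2 + 1) ^ 2"
    by (simp add: power2_eq_square mult_ac flip: power_mult_distrib)
  ultimately have "(sqrt 10 * (sqrt pi ^ n * sqrt n ^ n * sqrt n))\<^sup>2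
      \<le> (5 ^ n * Gamma (real n / 2 + 1))\<^sup>2"
    using pi_power_le_Gamma_squared[OF assms] by simp
  moreover have "0 < Gamma (real n / 2 + 1)"
    by (intro Gamma_real_pos) simp
  ultimately show ?thesis
    by (simp add: power2_le_iff_abs_le abs_le_iff)
qed

lemma unit_ball_vol_bound_large_dim:
  assumes n: "3 \<le> n"
  defines "y \<equiv> 1 / sqrt n"
  shows "real n powr (real n / 2) / 5 ^ n
           \<le> 2 * y / (unit_ball_vol (real n) * (3 * sqrt (1 + y\<^sup>2) ^ n + 1))"
proof -
  define G where "G = Gamma (real n / 2 + 1)"
  define D where "D = 3 * sqrt (1 + y\<^sup>2) ^ n + 1"
  have "0 < G"
    unfolding G_def by (intro Gamma_real_pos) simp
  \<comment> \<open>\<open>sqrt (1 + 1 / n) ^ n \<le> sqrt e\<close>\<close>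
  have "sqrt (1 + y\<^sup>2) ^ n \<le> sqrt 3"
  proof -
    have "(1 + y\<^sup>2) ^ n \<le> 3"
      using one_plus_div_power_le_exp[of 1 n] exp_le n by (simp add: y_def power_divide)
    then show ?thesis
      by (simp add: real_sqrt_power[symmetric])
  qed
  moreover have "sqrt 3 \<le> (1733 / 1000 :: real)"
    by (rule real_le_lsqrt) (auto simp: power2_eq_square)
  moreover have "(31 / 10 :: real) \<le> sqrt 10"
    by (rule real_le_rsqrt) (simp add: power2_eq_square)
  ultimately have "D \<le> 2 * sqrt 10"
    unfolding D_def by linarith
  then have "sqrt pi ^ n * sqrt n ^ n * sqrt n * D \<le> sqrt pi ^ n * sqrt n ^ n * sqrt n * (2 * sqrt 10)"
    by (intro mult_left_mono) auto
  also have "\<dots> \<le> 2 * (5 ^ n * G)"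
    using sqrt_pi_power_le_Gamma[OF n] by (simp add: G_def mult_ac)
  finally have main: "sqrt pi ^ n * sqrt n ^ n * sqrt n * D \<le> 2 * (5 ^ n * G)" .
  have rearrange: "N ^ n / F \<le> 2 * z / (P / G * D)"
    if "0 < N" "N * z = 1" "0 < P" "0 < D" "0 < F" "P * N ^ n * N * D \<le> 2 * (F * G)"
    for N z P F :: real
  proof -
    have "N ^ n / F = (P * N ^ n * N * D) / (F * (N * P * D))"
      using that \<open>0 < G\<close> by (simp add: field_simps)
    also have "\<dots> \<le> 2 * (F * G) / (F * (N * P * D))"
      using that by (intro divide_right_mono) auto
    also have "\<dots> = 2 * z / (P / G * D)"
      using that \<open>0 < G\<close> by (simp add: field_simps)
    finally show ?thesis .
  qed
  have "0 < D"
    unfolding D_def by (intro add_nonneg_pos mult_nonneg_nonneg zero_le_power) auto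
  moreover have "sqrt (real n) * y = 1"
    using n by (simp add: y_def)
  ultimately have "sqrt n ^ n / 5 ^ n \<le> 2 * y / (sqrt pi ^ n / G * D)"
    using n main by (intro rearrange) auto
  moreover have "unit_ball_vol (real n) = sqrt pi ^ n / G"
    using pi_gt_zero by (simp add: unit_ball_vol_def G_def powr_half_eq_sqrt_power)
  moreover have "real n powr (real n / 2) = sqrt n ^ n"
    using n by (simp add: powr_half_eq_sqrt_power)
  ultimately show ?thesis
    by (simp only: D_def)
qed

lemma unit_ball_vol_bound_exists:
  assumes "1 \<le> n"
  shows "\<exists>y>0. real n powr (real n / 2) / 5 ^ n
                 \<le> 2 * y / (unit_ball_vol (real n) * (3 * sqrt (1 + y\<^sup>2) ^ n + 1))"
proof -
  consider "n = 1" | "n = 2" | "3 \<le> n"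
    using assms by linarith
  then show ?thesis
  proof cases
    case 1
    define t where "t = sqrt (5 :: real)"
    have "0 \<le> t" "t \<le> 3"
      unfolding t_def by (auto intro: real_le_lsqrt)
    moreover have "sqrt (1 + 2\<^sup>2) = t"
      by (simp add: t_def)
    ultimately show ?thesis
      using 1 by (intro exI[of _ 2]) (simp add: divide_simps)
  next
    case 2
    have "pi \<le> 3.15"
      using pi_approx by simp
    then show ?thesis
      using 2 by (intro exI[of _ 1]) (simp add: divide_simps unit_ball_vol_2)
  next
    case 3
    then show ?thesis
      using unit_ball_vol_bound_large_dim[OF 3] by (intro exI[of _ "1 / sqrt n"]) simp
  qed
qed

lemma cball_subset_convex_body_centroid_0:
  fixes K :: "'a::euclidean_space set"
  assumes K: "convex_body K" "centroid K = 0" "0 < R" "K \<subseteq> cball 0 R" and "0 < y"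
  shows "cball 0 (2 * y / (unit_ball_vol DIM('a) * (3 * sqrt (1 + y\<^sup>2) ^ DIM('a) + 1))
                    * (measure lebesgue K / R ^ (DIM('a) - 1))) \<subseteq> K"
proof -
  define n where "n = DIM('a)"
  define w where "w = unit_ball_vol (real n)"
  define D where "D = 3 * sqrt (1 + y\<^sup>2) ^ n + 1"
  have "R\<^sup>2 + (y * R)\<^sup>2 = R\<^sup>2 * (1 + y\<^sup>2)"
    by (simp add: power_mult_distrib algebra_simps)
  then have "sqrt (R\<^sup>2 + (y * R)\<^sup>2) = R * sqrt (1 + y\<^sup>2)"
    using \<open>0 < R\<close> by (simp add: real_sqrt_mult)
  moreover have "R ^ n = R * R ^ (n - 1)"
    by (cases n) (simp_all add: n_def)
  ultimately have "3 * measure lebesgue (cball (0::'a) (sqrt (R\<^sup>2 + (y * R)\<^sup>2)))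
                     + measure lebesgue (cball (0::'a) R) = R * (w * R ^ (n - 1) * D)"
    using \<open>0 < R\<close> by (simp add: content_cball w_def D_def power_mult_distrib algebra_simps
        flip: n_def)
  then have "2 * (y * R) * measure lebesgue K / (3 * measure lebesgue (cball (0::'a) (sqrt (R\<^sup>2 + (y * R)\<^sup>2)))
                     + measure lebesgue (cball (0::'a) R))
      = 2 * y / (w * D) * (measure lebesgue K / R ^ (n - 1))"
    using \<open>0 < R\<close> by (simp add: mult_ac)
  with cball_subset_convex_body_by_ball_measures[OF K(1,2,4), of "y * R"] \<open>0 < R\<close> \<open>0 < y\<close>
  show ?thesis
    by (simp add: w_def D_def n_def)
qed

theorem lemma2p1:
  fixes K :: "'a::euclidean_space set" and R :: real
  assumes "convex_body K"
    and "centroid K = 0"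
    and "R > 0"
    and "K \<subseteq> cball 0 R"
  shows "\<exists>r. r \<ge> (real DIM('a) powr (real DIM('a) / 2) / 5 ^ DIM('a))
                   * (measure lebesgue K / R ^ (DIM('a) - 1))
            \<and> cball 0 r \<subseteq> K"
proof -
  obtain y where "0 < y" and y: "real DIM('a) powr (real DIM('a) / 2) / 5 ^ DIM('a)
      \<le> 2 * y / (unit_ball_vol DIM('a) * (3 * sqrt (1 + y\<^sup>2) ^ DIM('a) + 1))"
    using unit_ball_vol_bound_exists[of "DIM('a)"] by (auto simp: Suc_le_eq)
  let ?r = "2 * y / (unit_ball_vol DIM('a) * (3 * sqrt (1 + y\<^sup>2) ^ DIM('a) + 1))
              * (measure lebesgue K / R ^ (DIM('a) - 1))"
  have "cball 0 ?r \<subseteq> K"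
    using cball_subset_convex_body_centroid_0[OF assms \<open>0 < y\<close>] .
  moreover have "real DIM('a) powr (real DIM('a) / 2) / 5 ^ DIM('a)
                   * (measure lebesgue K / R ^ (DIM('a) - 1)) \<le> ?r"
    using y \<open>R > 0\<close> by (intro mult_right_mono) auto
  ultimately show ?thesis
    by blast
qed

end
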